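(* Let $G_0^*$ be a $k$-uniform hypergraph on $n$ vertices and let $\{U_1,\dots,U_t\}$ be a partition of its vertex set into $t$ sets of size $p$ (so $n=pt$). Order the vertices of $G_0^*$ so that $U_i$ consists of the $((i-1)p+1)$-th through the $(ip)$-th vertices, and compute $S(G_0^* )$ in this order. For $i=1,\dots,t$ let $G_i^*$ be a $(k,r)$-regular hypergraph on $m\ge 2$ vertices (same $k,r,m$ for all $i$). Put $$a=\begin{cases} p\left(\binom{p+m-2}{k-2}-\binom{p-2}{k-2}\right) & \text{if } p\ge 2,\\ 0 & \text{if } p=1,\end{cases}\qquad b=\binom{p+m-2}{k-2},\qquad c=\binom{p+m-2}{k-2}-\binom{m-2}{k-2},$$ $Y_{S_i}=S(G_i^* )-2c(J_m-I_m)$, and $h=h(\mu)=-(1+2r(k-1)+2c(m-1)+\mu)$. Let $G^*=G_0^*\odot_p^t G_i^*$ be the generalized corona. Then for every real $\mu$ such that $Y_{S_i}-J_m-\mu I_m$ is invertible for every $i$, $h\neq 0$ and $h+pmt\neq 0$, $$P_{S(G^* )}(\mu)=\Big(1+\frac{pmt}{h}\Big)\Big(\prod_{i=1}^t\det(Y_{S_i}-J_m-\mu I_m)\Big)^p\det\!\Big(S(G_0^* )+I_t\otimes\Big(-\big(2a+\tfrac{4pmb^2}{h}\big)J_p+(2a-\mu)I_p\Big)-\frac{pm}{h}\Big((t-4b)-\frac{pm(t-2b)^2}{h+pmt}\Big)J_n\Big).$$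
   Context: All hypergraphs are finite and simple: a hypergraph $G^*=(V,E)$ consists of a finite vertex set $V$ and a set $E$ of subsets of $V$ (hyperedges), each of size at least $2$. It is $k$-uniform if every hyperedge has exactly $k$ elements, and $(k,r)$-regular if it is $k$-uniform and every vertex lies in exactly $r$ hyperedges. For a hypergraph with vertices $v_1,\dots,v_n$, the adjacency matrix $A(G^* )$ is the $n\times n$ matrix whose $(i,j)$ entry, for $i\ne j$, is the number of hyperedges containing both $v_i$ and $v_j$, and whose diagonal entries are $0$; the Seidel matrix is $S(G^* )=J_n-I_n-2A(G^* )$. $J_n$ (resp. $J_{a,b}$) is the all-ones $n\times n$ (resp. $a\times b$) matrix, $I_n$ the identity matrix, $\otimes$ the Kronecker product. For a square matrix $M$, $P_M(\mu)=\det(M-\mu I)$. Binomial coefficients $\binom{x}{y}$ with integers $x\ge 0$ and $y$ are $0$ when $y<0$ or $y>x$. Generalized corona: let $G_0^*$ be a $k$-uniform hypergraph with vertex set $V_0$, $\{U_1,\dots,U_t\}$ a partition of $V_0$ with $|U_i|=p$, and $G_1^*,\dots,G_t^*$ $k$-uniform hypergraphs. The generalized corona $G_0^*\odot_p^t G_i^*$ is the $k$-uniform hypergraph obtained as follows: for each $i$ take $p$ copies $G_i^{*(1)},\dots,G_i^{*(p)}$ of $G_i^*$, all copies pairwise vertex-disjoint and disjoint from $V_0$. The vertex set is $V_0$ together with the vertices of all copies; the hyperedges are the hyperedges of $G_0^*$, the hyperedges of every copy, and, for every $i\in\{1,\dots,t\}$ and $j\in\{1,\dots,p\}$, every $k$-element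 subset of $U_i\cup V(G_i^{*(j)})$ that meets both $U_i$ and $V(G_i^{*(j)})$. *)

theory Defs
  imports "Jordan_Normal_Form.Determinant"
begin

definition hypergraph :: "nat \<Rightarrow> nat set set \<Rightarrow> bool" where
  "hypergraph n E \<longleftrightarrow> (\<forall>e\<in>E. e \<subseteq> {..<n} \<and> 2 \<le> card e)"

definition uniform_hg :: "nat \<Rightarrow> nat \<Rightarrow> nat set set \<Rightarrow> bool" where
  "uniform_hg k n E \<longleftrightarrow> hypergraph n E \<and> (\<forall>e\<in>E. card e = k)"

definition regular_hg :: "nat \<Rightarrow> nat \<Rightarrow> nat \<Rightarrow> nat set set \<Rightarrow> bool" where
  "regular_hg k r n E \<longleftrightarrow> uniform_hg k n E \<and> (\<forall>v<n. card {e\<in>E. v \<in> e} = r)"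

definition ones_mat :: "nat \<Rightarrow> nat \<Rightarrow> real mat" where
  "ones_mat a b = mat a b (\<lambda>_. 1)"

definition adj_mat :: "nat \<Rightarrow> nat set set \<Rightarrow> real mat" where
  "adj_mat n E = mat n n (\<lambda>(i,j). if i = j then 0 else real (card {e\<in>E. i \<in> e \<and> j \<in> e}))"

definition seidel_mat :: "nat \<Rightarrow> nat set set \<Rightarrow> real mat" where
  "seidel_mat n E = ones_mat n n - 1\<^sub>m n - 2 \<cdot>\<^sub>m adj_mat n E"

definition charP :: "real mat \<Rightarrow> real \<Rightarrow> real" where
  "charP M \<mu> = det (M - \<mu> \<cdot>\<^sub>m 1\<^sub>m (dim_row M))"

definition kron :: "real mat \<Rightarrow> real mat \<Rightarrow> real mat" where
  "kron A B = mat (dim_row A * dim_row B) (dim_col A * dim_col B)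
     (\<lambda>(i,j). A $$ (i div dim_row B, j div dim_col B) * B $$ (i mod dim_row B, j mod dim_col B))"

definition binom :: "nat \<Rightarrow> int \<Rightarrow> nat" where
  "binom x y = (if y < 0 then 0 else x choose (nat y))"

text \<open>Generalized corona with concrete labelling: G0 lives on {0..<p*t}, the part U_i
  (i < t) is {i*p..<(i+1)*p}; the j-th copy (j < p) of G_i (on {0..<m}) uses the
  vertices p*t + (i*p+j)*m + v, v < m.\<close>
definition part :: "nat \<Rightarrow> nat \<Rightarrow> nat set" where
  "part p i = {i*p..<(i+1)*p}"

definition copy_vtx :: "nat \<Rightarrow> nat \<Rightarrow> nat \<Rightarrow> nat \<Rightarrow> nat \<Rightarrow> nat \<Rightarrow> nat" where
  "copy_vtx p t m i j v = p*t + (i*p + j)*m + v"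

definition copy_set :: "nat \<Rightarrow> nat \<Rightarrow> nat \<Rightarrow> nat \<Rightarrow> nat \<Rightarrow> nat set" where
  "copy_set p t m i j = copy_vtx p t m i j ` {..<m}"

definition corona_edges ::
  "nat \<Rightarrow> nat \<Rightarrow> nat \<Rightarrow> nat \<Rightarrow> nat set set \<Rightarrow> (nat \<Rightarrow> nat set set) \<Rightarrow> nat set set" where
  "corona_edges k p t m E0 Gs =
     E0
     \<union> (\<Union>i<t. \<Union>j<p. (\<lambda>e. copy_vtx p t m i j ` e) ` Gs i)
     \<union> (\<Union>i<t. \<Union>j<p. {e. e \<subseteq> part p i \<union> copy_set p t m i j \<and> card e = k
                          \<and> e \<inter> part p i \<noteq> {} \<and> e \<inter> copy_set p t m i j \<noteq> {}})"

definition corona_size :: "nat \<Rightarrow> nat \<Rightarrow> nat \<Rightarrow> nat" where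
  "corona_size p t m = p*t + p*t*m"

end

theory Submission
  imports Defs
begin

text \<open>
  List the vertices of \<open>G\<^sup>*\<close> as those of \<open>G\<^sub>0\<^sup>*\<close> followed by the \<open>p t\<close> copies.  Counting the
  hyperedges through each pair of vertices shows that \<open>S(G\<^sup>*) - \<mu>I = [A, B; B\<^sup>T, D]\<close>, where
  \<open>D = diag(F\<^sub>b) + J\<close> and every diagonal block \<open>F\<^sub>b = Y\<^sub>i - J - \<mu>I\<close> has constant row sum \<open>h\<close>.
  Hence \<open>D = diag(F\<^sub>b) (I + J/h)\<close>, which gives \<open>det D = (1 + pmt/h) \<Prod> det F\<^sub>b\<close>.  The
  columns of \<open>B\<^sup>T\<close> are constant on every copy, so \<open>B\<^sup>T = D W\<close> for an explicit \<open>W\<close> built from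
  \<open>J\<close> and the block pattern of the partition, and block elimination yields
  \<open>det (S(G\<^sup>*) - \<mu>I) = det D \<cdot> det (A - B W)\<close>.
\<close>

lemma sum_blocks:
  fixes f :: "nat \<Rightarrow> 'a::comm_monoid_add"
  shows "(\<Sum>z<n*q. f z) = (\<Sum>i<n. \<Sum>v<q. f (i*q + v))"
proof -
  have "sum f {i*q..<i*q+q} = (\<Sum>v<q. f (i*q + v))" for i
    using sum.shift_bounds_nat_ivl[of f 0 "i*q" q] by (simp add: atLeast0LessThan add.commute)
  then show ?thesis by (simp flip: sum.nat_group)
qed

lemma prod_blocks:
  fixes f :: "nat \<Rightarrow> 'a::comm_monoid_mult"
  shows "(\<Prod>z<n*q. f z) = (\<Prod>i<n. \<Prod>v<q. f (i*q + v))"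
proof -
  have "prod f {i*q..<i*q+q} = (\<Prod>v<q. f (i*q + v))" for i
    using prod.shift_bounds_nat_ivl[of f 0 "i*q" q] by (simp add: atLeast0LessThan add.commute)
  then show ?thesis by (simp flip: prod.nat_group)
qed

lemma sum_div_blocks:
  fixes f :: "nat \<Rightarrow> 'a::comm_semiring_1"
  shows "(\<Sum>z<n*q. f (z div q)) = of_nat q * (\<Sum>i<n. f i)"
proof -
  have "(\<Sum>v<q. f ((i*q + v) div q)) = of_nat q * f i" for i
    by (cases "q = 0") simp_all
  then show ?thesis by (simp add: sum_blocks sum_distrib_left)
qed

lemma sum_copy_blocks:
  fixes f :: "nat \<Rightarrow> 'a::comm_semiring_1"
  shows "(\<Sum>z<p*t*m. f (z div m div p)) = of_nat (p*m) * (\<Sum>i<t. f i)"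
  using sum_div_blocks[where f=f and n=t and q="m*p"] by (simp add: div_mult2_eq mult_ac)

section \<open>Block matrices\<close>

lemma index_mult_mat_sum:
  "A \<in> carrier_mat nr n \<Longrightarrow> B \<in> carrier_mat n nc \<Longrightarrow> i < nr \<Longrightarrow> j < nc \<Longrightarrow>
    (A * B) $$ (i,j) = (\<Sum>z<n. A $$ (i,z) * B $$ (z,j))"
  by (simp add: scalar_prod_def atLeast0LessThan)

lemma det_four_block_mat_factor:
  fixes A :: "'a::idom mat"
  assumes A: "A \<in> carrier_mat n n" and B: "B \<in> carrier_mat n q" and D: "D \<in> carrier_mat q q"
    and W: "W \<in> carrier_mat q n"
  shows "det (four_block_mat A B (D * W) D) = det D * det (A - B * W)"
proof -
  let ?M = "four_block_mat A B (D * W) D"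
  let ?N = "four_block_mat (1\<^sub>m n) (0\<^sub>m n q) (- W) (1\<^sub>m q)"
  have "?M * ?N = four_block_mat (A * 1\<^sub>m n + B * (- W)) (A * 0\<^sub>m n q + B * 1\<^sub>m q)
      (D * W * 1\<^sub>m n + D * (- W)) (D * W * 0\<^sub>m n q + D * 1\<^sub>m q)"
    using A B D W by (intro mult_four_block_mat) auto
  also have "\<dots> = four_block_mat (A - B * W) B (0\<^sub>m q n) D"
    using A B D W by (intro cong_four_block_mat)
      (auto simp: uminus_mult_right_mat add_uminus_minus_mat[of _ n n] add_uminus_minus_mat[of _ q n])
  finally have MN: "?M * ?N = four_block_mat (A - B * W) B (0\<^sub>m q n) D" .
  have "det ?M * det ?N = det (?M * ?N)"
    using A B D W by (intro det_mult[symmetric, of _ "n+q"]) auto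
  moreover have "det ?N = 1"
    using W by (subst det_four_block_mat_upper_right_zero[of _ n _ q]) auto
  moreover have "det (four_block_mat (A - B * W) B (0\<^sub>m q n) D) = det (A - B * W) * det D"
    using A B D W by (intro det_four_block_mat_lower_left_zero[of _ n _ q]) auto
  ultimately show ?thesis using MN by (simp add: mult.commute)
qed

definition block_diag_mat :: "nat \<Rightarrow> nat \<Rightarrow> (nat \<Rightarrow> 'a::zero mat) \<Rightarrow> 'a mat" where
  "block_diag_mat m q F = mat (q*m) (q*m)
     (\<lambda>(x,y). if x div m = y div m then F (x div m) $$ (x mod m, y mod m) else 0)"

lemma block_diag_mat_carrier[simp]: "block_diag_mat m q F \<in> carrier_mat (q*m) (q*m)"
  and block_diag_mat_dim[simp]: "dim_row (block_diag_mat m q F) = q*m" "dim_col (block_diag_mat m q F) = q*m"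
  by (simp_all add: block_diag_mat_def)

lemma det_block_diag_mat:
  fixes F :: "nat \<Rightarrow> 'a::idom mat"
  assumes "\<And>b. b < q \<Longrightarrow> F b \<in> carrier_mat m m"
  shows "det (block_diag_mat m q F) = (\<Prod>b<q. det (F b))"
  using assms
proof (induction q)
  case 0 then show ?case by (simp add: block_diag_mat_def det_def)
next
  case (Suc q)
  have Fq: "F q \<in> carrier_mat m m" using Suc.prems by simp
  have split: "block_diag_mat m (Suc q) F
      = four_block_mat (block_diag_mat m q F) (0\<^sub>m (q*m) m) (0\<^sub>m m (q*m)) (F q)"
  proof (rule eq_matI)
    fix x y assume "x < dim_row (four_block_mat (block_diag_mat m q F) (0\<^sub>m (q*m) m) (0\<^sub>m m (q*m)) (F q))"
      and "y < dim_col (four_block_mat (block_diag_mat m q F) (0\<^sub>m (q*m) m) (0\<^sub>m m (q*m)) (F q))"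
    then have x: "x < q*m + m" and y: "y < q*m + m" using Fq by auto
    have low: "z < q*m \<Longrightarrow> z div m < q" for z by (simp add: less_mult_imp_div_less)
    have high: "\<not> z < q*m \<Longrightarrow> z < q*m + m \<Longrightarrow> z div m = q \<and> z mod m = z - q*m" for z
    proof -
      assume "\<not> z < q*m" "z < q*m + m"
      then obtain v where "z = q*m + v" "v < m" by (metis add_less_cancel_left le_Suc_ex not_less)
      then show ?thesis by simp
    qed
    show "block_diag_mat m (Suc q) F $$ (x, y)
        = four_block_mat (block_diag_mat m q F) (0\<^sub>m (q*m) m) (0\<^sub>m m (q*m)) (F q) $$ (x, y)"
      using x y Fq low[of x] low[of y] high[of x] high[of y]
      by (cases "x < q*m"; cases "y < q*m") (auto simp: block_diag_mat_def)
  qed (use Fq in \<open>auto simp: block_diag_mat_def\<close>)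
  show ?case
    unfolding split using Suc Fq by (subst det_four_block_mat_upper_right_zero[of _ "q*m" _ m]) auto
qed

lemma block_diag_mat_mult_block_constant:
  fixes F :: "nat \<Rightarrow> 'a::comm_semiring_1 mat"
  assumes rows: "\<And>b v. b < q \<Longrightarrow> v < m \<Longrightarrow> (\<Sum>w<m. F b $$ (v,w)) = s"
  shows "block_diag_mat m q F * mat (q*m) n (\<lambda>(z,w). g (z div m) w)
       = s \<cdot>\<^sub>m mat (q*m) n (\<lambda>(z,w). g (z div m) w)"
proof (rule eq_matI)
  fix x w assume "x < dim_row (s \<cdot>\<^sub>m mat (q*m) n (\<lambda>(z,w). g (z div m) w))"
    and "w < dim_col (s \<cdot>\<^sub>m mat (q*m) n (\<lambda>(z,w). g (z div m) w))"
  then have x: "x < q*m" and w: "w < n" by auto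
  have xb: "x div m < q" using x by (simp add: less_mult_imp_div_less)
  have idx: "b*m + v < q*m" if "b < q" "v < m" for b v
  proof -
    have "b*m + v < (b+1)*m" using that by simp
    also have "\<dots> \<le> q*m" using that by (intro mult_le_mono1) simp
    finally show ?thesis .
  qed
  have "(block_diag_mat m q F * mat (q*m) n (\<lambda>(z,w). g (z div m) w)) $$ (x,w)
      = (\<Sum>z<q*m. block_diag_mat m q F $$ (x,z) * g (z div m) w)"
    using x w by (subst index_mult_mat_sum[of _ _ "q*m"]) (auto intro!: sum.cong)
  also have "\<dots> = (\<Sum>b<q. \<Sum>v<m. block_diag_mat m q F $$ (x, b*m+v) * g ((b*m+v) div m) w)"
    by (rule sum_blocks)
  also have "\<dots> = (\<Sum>b<q. if b = x div m then (\<Sum>v<m. F b $$ (x mod m, v)) * g b w else 0)"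
    using x idx by (intro sum.cong refl) (auto simp: block_diag_mat_def sum_distrib_right intro!: sum.cong)
  also have "\<dots> = s * g (x div m) w"
    using xb x rows[of "x div m" "x mod m"] by (cases "m = 0") simp_all
  finally show "(block_diag_mat m q F * mat (q*m) n (\<lambda>(z,w). g (z div m) w)) $$ (x,w)
      = (s \<cdot>\<^sub>m mat (q*m) n (\<lambda>(z,w). g (z div m) w)) $$ (x,w)"
    using x w by simp
qed auto

lemma ones_mat_carrier[simp]: "ones_mat a b \<in> carrier_mat a b"
  and ones_mat_dim[simp]: "dim_row (ones_mat a b) = a" "dim_col (ones_mat a b) = b"
  and ones_mat_index[simp]: "i < a \<Longrightarrow> j < b \<Longrightarrow> ones_mat a b $$ (i,j) = 1"
  by (auto simp: ones_mat_def)

text \<open>The matrix determinant lemma for the rank-one matrix \<open>c J\<close>: the block matrix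
  \<open>[1, -r; c r\<^sup>T, I]\<close> with the all-ones row \<open>r\<close> has determinant \<open>1 + c n\<close> by one Schur
  complement and \<open>det (I + c J)\<close> by the other.\<close>

lemma det_one_plus_smult_ones_mat:
  fixes c :: real
  shows "det (1\<^sub>m n + c \<cdot>\<^sub>m ones_mat n n) = 1 + c * real n"
proof -
  let ?r = "ones_mat 1 n" and ?col = "c \<cdot>\<^sub>m ones_mat n 1"
  let ?M = "four_block_mat (1\<^sub>m 1) (- ?r) ?col (1\<^sub>m n)"
  let ?L = "four_block_mat (1\<^sub>m 1) (0\<^sub>m 1 n) ?col (1\<^sub>m n + c \<cdot>\<^sub>m ones_mat n n)"
  let ?U = "four_block_mat (1\<^sub>m 1) (- ?r) (0\<^sub>m n 1) (1\<^sub>m n)"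
  have "?L * ?U = four_block_mat (1\<^sub>m 1 * 1\<^sub>m 1 + 0\<^sub>m 1 n * 0\<^sub>m n 1) (1\<^sub>m 1 * - ?r + 0\<^sub>m 1 n * 1\<^sub>m n)
      (?col * 1\<^sub>m 1 + (1\<^sub>m n + c \<cdot>\<^sub>m ones_mat n n) * 0\<^sub>m n 1)
      (?col * - ?r + (1\<^sub>m n + c \<cdot>\<^sub>m ones_mat n n) * 1\<^sub>m n)"
    by (intro mult_four_block_mat) auto
  also have "\<dots> = ?M"
    by (intro cong_four_block_mat eq_matI) (auto simp: scalar_prod_def)
  finally have LU: "?L * ?U = ?M" .
  have "det ?M = det ?L * det ?U"
    unfolding LU[symmetric] by (intro det_mult[of _ "1+n"]) auto
  also have "det ?L = det (1\<^sub>m n + c \<cdot>\<^sub>m ones_mat n n)"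
    by (subst det_four_block_mat_upper_right_zero[of _ 1 _ n]) auto
  also have "det ?U = 1"
    by (subst det_four_block_mat_lower_left_zero[of _ 1 _ n]) auto
  finally have "det (1\<^sub>m n + c \<cdot>\<^sub>m ones_mat n n) = det ?M" by simp
  also have "?col = 1\<^sub>m n * ?col" by simp
  also have "det (four_block_mat (1\<^sub>m 1) (- ?r) (1\<^sub>m n * ?col) (1\<^sub>m n))
      = det (1\<^sub>m n) * det (1\<^sub>m 1 - - ?r * ?col)"
    by (intro det_four_block_mat_factor) auto
  also have "1\<^sub>m 1 - - ?r * ?col = (1 + c * real n) \<cdot>\<^sub>m 1\<^sub>m 1"
    by (intro eq_matI) (auto simp: scalar_prod_def)
  finally show ?thesis by simp
qed

definition codegree :: "nat set set \<Rightarrow> nat \<Rightarrow> nat \<Rightarrow> nat" where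
  "codegree E x y = card {e\<in>E. x \<in> e \<and> y \<in> e}"

lemma codegree_commute: "codegree E x y = codegree E y x"
  unfolding codegree_def by (simp add: conj_commute)

lemma seidel_mat_index:
  "x < n \<Longrightarrow> y < n \<Longrightarrow>
    seidel_mat n E $$ (x,y) = (if x = y then 0 else 1 - 2 * real (codegree E x y))"
  by (simp add: seidel_mat_def adj_mat_def codegree_def)

lemma seidel_mat_carrier[simp]: "seidel_mat n E \<in> carrier_mat n n"
  and seidel_mat_dim[simp]: "dim_row (seidel_mat n E) = n" "dim_col (seidel_mat n E) = n"
  by (auto simp: seidel_mat_def adj_mat_def)

lemma card_pair_subsets:
  assumes U: "finite U" and xy: "x \<in> U" "y \<in> U" "x \<noteq> y"
  shows "card {e. e \<subseteq> U \<and> card e = k \<and> x \<in> e \<and> y \<in> e} = binom (card U - 2) (int k - 2)"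
proof (cases "k < 2")
  case True
  have "card e \<noteq> k" if "e \<subseteq> U" "x \<in> e" "y \<in> e" for e
  proof -
    have "card {x,y} \<le> card e" using that U finite_subset by (intro card_mono) auto
    then show ?thesis using xy True by auto
  qed
  then have "{e. e \<subseteq> U \<and> card e = k \<and> x \<in> e \<and> y \<in> e} = {}" by blast
  then have "card {e. e \<subseteq> U \<and> card e = k \<and> x \<in> e \<and> y \<in> e} = 0"
    by (simp only: card.empty)
  then show ?thesis using True by (simp add: binom_def)
next
  case False
  let ?S = "{e. e \<subseteq> U \<and> card e = k \<and> x \<in> e \<and> y \<in> e}"
  let ?T = "{f. f \<subseteq> U - {x,y} \<and> card f = k - 2}"
  have "bij_betw (\<lambda>e. e - {x,y}) ?S ?T"
  proof (rule bij_betw_byWitness[where f' = "\<lambda>f. f \<union> {x,y}"])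
    show "(\<lambda>e. e - {x, y}) ` ?S \<subseteq> ?T"
    proof
      fix f assume "f \<in> (\<lambda>e. e - {x, y}) ` ?S"
      then obtain e where e: "e \<in> ?S" "f = e - {x,y}" by auto
      have "card f = card e - card {x,y}"
        unfolding e(2) using e U finite_subset by (intro card_Diff_subset) auto
      then show "f \<in> ?T" using e xy by auto
    qed
    show "(\<lambda>f. f \<union> {x, y}) ` ?T \<subseteq> ?S"
    proof
      fix e assume "e \<in> (\<lambda>f. f \<union> {x, y}) ` ?T"
      then obtain f where f: "f \<in> ?T" "e = f \<union> {x,y}" by auto
      have "card e = card f + card {x,y}"
        unfolding f(2) using f U finite_subset by (intro card_Un_disjoint) auto
      then show "e \<in> ?S" using f xy False by auto
    qed
  qed auto
  then have "card ?S = card ?T" by (rule bij_betw_same_card)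
  also have "\<dots> = card (U - {x,y}) choose (k - 2)" using U by (simp add: n_subsets)
  also have "card (U - {x,y}) = card U - 2" using U xy by (simp add: card_Diff_subset)
  finally show ?thesis using False by (simp add: binom_def nat_diff_distrib)
qed

lemma card_pair_subsets_not_within:
  assumes U: "finite U" and W: "W \<subseteq> U" and xy: "x \<in> W" "y \<in> W" "x \<noteq> y"
  shows "real (card {e. e \<subseteq> U \<and> card e = k \<and> x \<in> e \<and> y \<in> e \<and> \<not> e \<subseteq> W})
      = real (binom (card U - 2) (int k - 2)) - real (binom (card W - 2) (int k - 2))"
proof -
  let ?SU = "{e. e \<subseteq> U \<and> card e = k \<and> x \<in> e \<and> y \<in> e}"
  let ?SW = "{e. e \<subseteq> W \<and> card e = k \<and> x \<in> e \<and> y \<in> e}"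
  have eq: "{e. e \<subseteq> U \<and> card e = k \<and> x \<in> e \<and> y \<in> e \<and> \<not> e \<subseteq> W} = ?SU - ?SW" by auto
  have sub: "?SW \<subseteq> ?SU" using W by auto
  have fin: "finite ?SU" by (rule finite_subset[of _ "Pow U"]) (use U in auto)
  have "card ?SW \<le> card ?SU" using fin sub by (rule card_mono)
  then have "real (card (?SU - ?SW)) = real (card ?SU) - real (card ?SW)"
    using sub fin by (simp add: card_Diff_subset finite_subset of_nat_diff)
  moreover have "finite W" using U W by (rule rev_finite_subset)
  ultimately show ?thesis unfolding eq
    using card_pair_subsets[OF U, of x y k] card_pair_subsets[of W x y k] xy W by (simp add: subsetD)
qed

lemma regular_hg_codegree_sum:
  assumes reg: "regular_hg k r m G" and v: "v < m"
  shows "(\<Sum>w\<in>{..<m}-{v}. real (codegree G v w)) = real r * (real k - 1)"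
proof -
  have G: "\<And>e. e \<in> G \<Longrightarrow> e \<subseteq> {..<m} \<and> card e = k"
    using reg unfolding regular_hg_def uniform_hg_def hypergraph_def by auto
  have fG: "finite G" by (rule finite_subset[of _ "Pow {..<m}"]) (use G in auto)
  have edge: "(\<Sum>w\<in>{..<m}-{v}. if v \<in> e \<and> w \<in> e then 1 else 0 :: real)
      = (if v \<in> e then real k - 1 else 0)" if e: "e \<in> G" for e
  proof -
    have fe: "finite e" using G[OF e] finite_subset by blast
    have "({..<m}-{v}) \<inter> e = e - {v}" using G e by auto
    moreover have "v \<in> e \<Longrightarrow> card e \<ge> 1"
      using fe card_gt_0_iff[of e] by fastforce
    ultimately show ?thesis
      using G[OF e] fe by (simp add: sum.If_cases card_Diff_singleton of_nat_diff)
  qed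
  have "(\<Sum>w\<in>{..<m}-{v}. real (codegree G v w))
      = (\<Sum>w\<in>{..<m}-{v}. \<Sum>e\<in>G. if v \<in> e \<and> w \<in> e then 1 else 0)"
    using fG by (intro sum.cong refl) (simp add: codegree_def sum.If_cases Int_def)
  also have "\<dots> = (\<Sum>e\<in>G. if v \<in> e then real k - 1 else 0)"
    by (subst sum.swap) (simp add: edge)
  also have "\<dots> = real (card {e\<in>G. v \<in> e}) * (real k - 1)"
    using fG by (simp add: sum.If_cases Int_def conj_commute)
  finally show ?thesis using reg v unfolding regular_hg_def by simp
qed

lemma mem_part_iff: "0 < p \<Longrightarrow> z \<in> part p i \<longleftrightarrow> z div p = i"
  unfolding part_def
proof
  assume "z \<in> {i*p..<(i+1)*p}"
  then show "z div p = i" by (intro div_nat_eqI) (auto simp: mult.commute)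
next
  assume p: "0 < p" and z: "z div p = i"
  have "z = i*p + z mod p" using div_mult_mod_eq[of z p] z by simp
  moreover have "z mod p < p" using p by simp
  ultimately show "z \<in> {i*p..<(i+1)*p}" by simp
qed

lemma finite_part[simp]: "finite (part p i)"
  and card_part: "card (part p i) = p"
  by (simp_all add: part_def)

lemma finite_copy_set[simp]: "finite (copy_set p t m i j)"
  by (simp add: copy_set_def)

lemma card_copy_set: "card (copy_set p t m i j) = m"
  unfolding copy_set_def by (subst card_image) (auto simp: copy_vtx_def inj_on_def)

lemma part_less: "i < t \<Longrightarrow> z \<in> part p i \<Longrightarrow> z < p*t"
proof -
  assume "i < t" "z \<in> part p i"
  then have "z < (i+1)*p" by (simp add: part_def)
  also have "\<dots> \<le> t*p" using \<open>i < t\<close> by (intro mult_le_mono1) simp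
  finally show "z < p*t" by (simp add: mult.commute)
qed

lemma copy_set_ge: "z \<in> copy_set p t m i j \<Longrightarrow> p*t \<le> z"
  by (auto simp: copy_set_def copy_vtx_def)

lemma part_copy_set_disjoint: "i < t \<Longrightarrow> part p i \<inter> copy_set p t m i' j = {}"
  using part_less copy_set_ge by fastforce

lemma card_part_Un_copy_set: "i < t \<Longrightarrow> card (part p i \<union> copy_set p t m i j) = p + m"
  by (subst card_Un_disjoint) (auto simp: part_copy_set_disjoint card_part card_copy_set)

lemma div_less_of_less_mult: "x < p*t \<Longrightarrow> x div p < (t::nat)"
  by (simp add: less_mult_imp_div_less mult.commute)

lemma copy_index_bounds:
  fixes z :: nat
  assumes "z < p*t*m"
  shows "z div m div p < t" "z div m mod p < p" "z mod m < m"
proof -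
  have "0 < p" "0 < m" using assms by (auto intro: ccontr)
  moreover have "z div m < p*t" using assms by (simp add: less_mult_imp_div_less)
  ultimately show "z div m div p < t" "z div m mod p < p" "z mod m < m"
    using div_less_of_less_mult by auto
qed

lemma copy_vtx_ge: "p*t \<le> copy_vtx p t m i j v"
  by (simp add: copy_vtx_def)

lemma copy_vtx_div_mod: "copy_vtx p t m (z div m div p) (z div m mod p) (z mod m) = p*t + z"
  by (simp add: copy_vtx_def)

lemma copy_vtx_eq_iff:
  assumes "j < p" "j' < p" "v < m" "v' < m"
  shows "copy_vtx p t m i j v = copy_vtx p t m i' j' v' \<longleftrightarrow> i = i' \<and> j = j' \<and> v = v'"
proof
  assume "copy_vtx p t m i j v = copy_vtx p t m i' j' v'"
  then have eq: "(i*p+j)*m + v = (i'*p+j')*m + v'" by (simp add: copy_vtx_def)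
  have "0 < m" using assms by simp
  then have "i*p+j = i'*p+j'" "v = v'"
    using arg_cong[OF eq, of "\<lambda>z. z div m"] arg_cong[OF eq, of "\<lambda>z. z mod m"] assms by simp_all
  moreover have "i = i'" "j = j'"
    using arg_cong[OF calculation(1), of "\<lambda>z. z div p"] arg_cong[OF calculation(1), of "\<lambda>z. z mod p"]
      assms by simp_all
  ultimately show "i = i' \<and> j = j' \<and> v = v'" by simp
qed simp

lemma copy_vtx_in_copy_set_iff:
  "j < p \<Longrightarrow> j' < p \<Longrightarrow> v < m \<Longrightarrow>
    copy_vtx p t m i j v \<in> copy_set p t m i' j' \<longleftrightarrow> i = i' \<and> j = j'"
  unfolding copy_set_def by (auto simp: copy_vtx_eq_iff)

lemma copy_vtx_in_image_iff:
  "j < p \<Longrightarrow> j' < p \<Longrightarrow> v < m \<Longrightarrow> g \<subseteq> {..<m} \<Longrightarrow>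
    copy_vtx p t m i j v \<in> copy_vtx p t m i' j' ` g \<longleftrightarrow> i = i' \<and> j = j' \<and> v \<in> g"
  by (auto simp: copy_vtx_eq_iff subset_eq)

lemma copy_sets_disjoint:
  "j < p \<Longrightarrow> j' < p \<Longrightarrow> (i,j) \<noteq> (i',j') \<Longrightarrow> copy_set p t m i j \<inter> copy_set p t m i' j' = {}"
  by (auto simp: copy_set_def copy_vtx_eq_iff)

definition mixed_edges :: "nat \<Rightarrow> nat \<Rightarrow> nat \<Rightarrow> nat \<Rightarrow> nat \<Rightarrow> nat \<Rightarrow> nat set set" where
  "mixed_edges k p t m i j = {e. e \<subseteq> part p i \<union> copy_set p t m i j \<and> card e = k
      \<and> e \<inter> part p i \<noteq> {} \<and> e \<inter> copy_set p t m i j \<noteq> {}}"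

lemma mem_corona_edges_iff:
  "e \<in> corona_edges k p t m E0 Gs \<longleftrightarrow> e \<in> E0
    \<or> (\<exists>i<t. \<exists>j<p. \<exists>g\<in>Gs i. e = copy_vtx p t m i j ` g)
    \<or> (\<exists>i<t. \<exists>j<p. e \<in> mixed_edges k p t m i j)"
  unfolding corona_edges_def mixed_edges_def by blast

lemma corona_edgeE:
  assumes "e \<in> corona_edges k p t m E0 Gs"
  obtains "e \<in> E0"
    | i j g where "i < t" "j < p" "g \<in> Gs i" "e = copy_vtx p t m i j ` g"
    | i j where "i < t" "j < p" "e \<in> mixed_edges k p t m i j"
  using assms unfolding mem_corona_edges_iff by blast

section \<open>Codegrees in the generalized corona\<close>

locale corona_hypergraph =
  fixes k r p t m :: nat and E0 :: "nat set set" and Gs :: "nat \<Rightarrow> nat set set"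
  assumes p_pos: "1 \<le> p" and m_ge_2: "2 \<le> m"
    and base_uniform: "uniform_hg k (p*t) E0"
    and copies_regular: "\<forall>i<t. regular_hg k r m (Gs i)"
begin

lemma p_gt_0: "0 < p"
  using p_pos by simp

abbreviation corona :: "nat set set" where
  "corona \<equiv> corona_edges k p t m E0 Gs"

lemma base_edge_subset: "e \<in> E0 \<Longrightarrow> e \<subseteq> {..<p*t}"
  using base_uniform unfolding uniform_hg_def hypergraph_def by auto

lemma finite_base_edges: "finite E0"
  by (rule finite_subset[of _ "Pow {..<p*t}"]) (use base_edge_subset in auto)

lemma copy_edge_subset: "i < t \<Longrightarrow> g \<in> Gs i \<Longrightarrow> g \<subseteq> {..<m}"
  using copies_regular unfolding regular_hg_def uniform_hg_def hypergraph_def by auto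

lemma finite_copy_edges: "i < t \<Longrightarrow> finite (Gs i)"
  by (rule finite_subset[of _ "Pow {..<m}"]) (use copy_edge_subset in auto)

text \<open>The extra codegree that the mixed edges give to a pair inside one part \<open>U\<^sub>i\<close>
  (the paper's \<open>a\<close>), to a pair joining \<open>U\<^sub>i\<close> to one of its copies (\<open>b\<close>), and to a pair
  inside one copy (\<open>c\<close>).\<close>

definition part_codeg :: real where
  "part_codeg = (if 2 \<le> p then real p * (real (binom (p+m-2) (int k - 2)) - real (binom (p-2) (int k - 2))) else 0)"

definition cross_codeg :: real where
  "cross_codeg = real (binom (p+m-2) (int k - 2))"

definition copy_codeg :: real where
  "copy_codeg = real (binom (p+m-2) (int k - 2)) - real (binom (m-2) (int k - 2))"

lemma corona_edges_through_base_pair: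
  assumes x: "x < p*t" and y: "y < p*t"
  shows "{e\<in>corona. x\<in>e \<and> y\<in>e} = {e\<in>E0. x\<in>e \<and> y\<in>e} \<union>
    (\<Union>j\<in>(if x div p = y div p then {..<p} else {}).
      {e. e \<subseteq> part p (x div p) \<union> copy_set p t m (x div p) j \<and> card e = k \<and> x\<in>e \<and> y\<in>e
          \<and> \<not> e \<subseteq> part p (x div p)})"
    (is "_ = _ \<union> (\<Union>j\<in>?J. ?M j)")
proof (intro equalityI subsetI)
  fix e assume "e \<in> {e\<in>corona. x\<in>e \<and> y\<in>e}"
  then have e: "e \<in> corona" "x \<in> e" "y \<in> e" by auto
  from e(1) show "e \<in> {e\<in>E0. x\<in>e \<and> y\<in>e} \<union> (\<Union>j\<in>?J. ?M j)"
  proof (cases rule: corona_edgeE)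
    case 1 then show ?thesis using e by simp
  next
    case (2 i j g)
    then have "p*t \<le> x" using e(2) by (auto simp: copy_vtx_def)
    then show ?thesis using x by simp
  next
    case (3 i j)
    then have sub: "e \<subseteq> part p i \<union> copy_set p t m i j" and meets: "e \<inter> copy_set p t m i j \<noteq> {}"
      and "card e = k" by (auto simp: mixed_edges_def)
    have "x \<notin> copy_set p t m i j" "y \<notin> copy_set p t m i j"
      using x y copy_set_ge leD by blast+
    then have "x \<in> part p i" "y \<in> part p i" using sub e by blast+
    then have "x div p = i" "y div p = i" using mem_part_iff p_gt_0 by auto
    moreover have "\<not> e \<subseteq> part p i" using meets part_copy_set_disjoint[OF 3(1)] by blast
    ultimately show ?thesis using sub e \<open>card e = k\<close> 3(2) by auto
  qed
next
  fix e assume "e \<in> {e\<in>E0. x\<in>e \<and> y\<in>e} \<union> (\<Union>j\<in>?J. ?M j)"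
  then consider "e \<in> E0" "x \<in> e" "y \<in> e" | j where "x div p = y div p" "j < p" "e \<in> ?M j"
    by (auto split: if_splits)
  then show "e \<in> {e\<in>corona. x\<in>e \<and> y\<in>e}"
  proof cases
    case 1 then show ?thesis by (simp add: mem_corona_edges_iff)
  next
    case (2 j)
    have "x \<in> part p (x div p)" using mem_part_iff p_gt_0 by blast
    then have "e \<in> mixed_edges k p t m (x div p) j" using 2(3) by (auto simp: mixed_edges_def)
    then show ?thesis using 2 div_less_of_less_mult[OF x] by (auto simp: mem_corona_edges_iff)
  qed
qed

lemma codegree_corona_base:
  assumes x: "x < p*t" and y: "y < p*t" and xy: "x \<noteq> y"
  shows "real (codegree corona x y)
    = real (codegree E0 x y) + (if x div p = y div p then part_codeg else 0)"
proof -
  define i where "i = x div p"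
  define M where "M j = {e. e \<subseteq> part p i \<union> copy_set p t m i j \<and> card e = k \<and> x\<in>e \<and> y\<in>e
      \<and> \<not> e \<subseteq> part p i}" for j
  have it: "i < t" using div_less_of_less_mult[OF x] by (simp add: i_def)
  have finM: "finite (M j)" for j
    by (rule finite_subset[of _ "Pow (part p i \<union> copy_set p t m i j)"]) (auto simp: M_def)
  have outside: "\<exists>z\<in>e. z \<in> copy_set p t m i j" if "e \<in> M j" for e j
    using that by (auto simp: M_def)
  have disj_base: "{e\<in>E0. x\<in>e \<and> y\<in>e} \<inter> M j = {}" for j
    using outside base_edge_subset copy_set_ge by fastforce
  have disj_copies: "M j \<inter> M j' = {}" if "j < p" "j' < p" "j \<noteq> j'" for j j'
    using copy_sets_disjoint[of j p j' i i t m] that unfolding M_def by blast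
  show ?thesis
  proof (cases "x div p = y div p")
    case False
    then show ?thesis using corona_edges_through_base_pair[OF x y] by (simp add: codegree_def)
  next
    case True
    have "x \<in> part p i" "y \<in> part p i" using mem_part_iff p_gt_0 True by (auto simp: i_def)
    then have cardM: "real (card (M j)) = real (binom (p+m-2) (int k - 2)) - real (binom (p-2) (int k - 2))"
      for j unfolding M_def
      using card_pair_subsets_not_within[of "part p i \<union> copy_set p t m i j" "part p i" x y k]
        xy card_part_Un_copy_set[OF it] card_part by auto
    have "p \<noteq> 1" using True xy by auto
    have "codegree corona x y = card {e\<in>E0. x\<in>e \<and> y\<in>e} + card (\<Union>j<p. M j)"
      unfolding codegree_def corona_edges_through_base_pair[OF x y] using True
      by (subst card_Un_disjoint) (use finite_base_edges finM disj_base in \<open>auto simp: M_def i_def\<close>)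
    also have "card (\<Union>j<p. M j) = (\<Sum>j<p. card (M j))"
      by (rule card_UN_disjoint) (use finM disj_copies in auto)
    finally show ?thesis
      using True cardM \<open>p \<noteq> 1\<close> p_pos by (simp add: codegree_def part_codeg_def)
  qed
qed

lemma corona_edges_through_cross_pair:
  assumes x: "x < p*t" and ij: "i < t" "j < p" and w: "w < m"
  shows "{e\<in>corona. x\<in>e \<and> copy_vtx p t m i j w \<in> e} = (if x div p = i then
      {e. e \<subseteq> part p i \<union> copy_set p t m i j \<and> card e = k \<and> x\<in>e \<and> copy_vtx p t m i j w \<in> e}
    else {})"
    (is "{e\<in>corona. x\<in>e \<and> ?y\<in>e} = ?R")
proof (intro equalityI subsetI)
  have y: "?y \<in> copy_set p t m i j" using w by (simp add: copy_set_def)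
  fix e assume "e \<in> {e\<in>corona. x\<in>e \<and> ?y\<in>e}"
  then have e: "e \<in> corona" "x \<in> e" "?y \<in> e" by auto
  from e(1) show "e \<in> ?R"
  proof (cases rule: corona_edgeE)
    case 1
    then have "?y < p*t" using e(3) base_edge_subset by blast
    then show ?thesis using copy_vtx_ge[of p t m i j w] by simp
  next
    case (2 i' j' g)
    then have "p*t \<le> x" using e(2) by (auto simp: copy_vtx_def)
    then show ?thesis using x by simp
  next
    case (3 i' j')
    then have sub: "e \<subseteq> part p i' \<union> copy_set p t m i' j'" and "card e = k"
      by (auto simp: mixed_edges_def)
    have "x \<notin> copy_set p t m i' j'" using x copy_set_ge leD by blast
    then have "x \<in> part p i'" using sub e by blast
    have "?y \<notin> part p i'" using part_less[OF 3(1)] copy_vtx_ge leD by blast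
    then have "?y \<in> copy_set p t m i' j'" using sub e by blast
    then have "i' = i \<and> j' = j" using copy_vtx_in_copy_set_iff[OF ij(2) 3(2) w] by simp
    then show ?thesis using sub e \<open>card e = k\<close> \<open>x \<in> part p i'\<close> mem_part_iff p_gt_0 by auto
  qed
next
  have y: "?y \<in> copy_set p t m i j" using w by (simp add: copy_set_def)
  fix e assume "e \<in> ?R"
  then have "x div p = i" and e: "e \<subseteq> part p i \<union> copy_set p t m i j" "card e = k" "x \<in> e" "?y \<in> e"
    by (auto split: if_splits)
  then have "x \<in> part p i" using mem_part_iff p_gt_0 by blast
  then have "e \<in> mixed_edges k p t m i j" using e y by (auto simp: mixed_edges_def)
  then show "e \<in> {e\<in>corona. x\<in>e \<and> ?y\<in>e}" using e ij by (auto simp: mem_corona_edges_iff)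
qed

lemma codegree_corona_cross:
  assumes x: "x < p*t" and ij: "i < t" "j < p" and w: "w < m"
  shows "real (codegree corona x (copy_vtx p t m i j w)) = (if x div p = i then cross_codeg else 0)"
proof (cases "x div p = i")
  case True
  have "x \<in> part p i" using True mem_part_iff p_gt_0 by simp
  moreover have "copy_vtx p t m i j w \<in> copy_set p t m i j" using w by (simp add: copy_set_def)
  moreover have "x \<noteq> copy_vtx p t m i j w" using x copy_vtx_ge leD by blast
  ultimately show ?thesis
    using True corona_edges_through_cross_pair[OF assms] card_part_Un_copy_set[OF ij(1)]
      card_pair_subsets[of "part p i \<union> copy_set p t m i j" x "copy_vtx p t m i j w" k]
    by (simp add: codegree_def cross_codeg_def)
qed (simp add: codegree_def corona_edges_through_cross_pair[OF assms])

lemma corona_edges_through_copy_pair: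
  assumes ij: "i < t" "j < p" and v: "v < m" and ij': "i' < t" "j' < p" and w: "w < m"
  defines "x \<equiv> copy_vtx p t m i j v" and "y \<equiv> copy_vtx p t m i' j' w"
  shows "{e\<in>corona. x\<in>e \<and> y\<in>e} = (if i = i' \<and> j = j' then
      (\<lambda>g. copy_vtx p t m i j ` g) ` {g\<in>Gs i. v \<in> g \<and> w \<in> g}
      \<union> {e. e \<subseteq> part p i \<union> copy_set p t m i j \<and> card e = k \<and> x\<in>e \<and> y\<in>e \<and> \<not> e \<subseteq> copy_set p t m i j}
    else {})"
    (is "_ = ?R")
proof (intro equalityI subsetI)
  fix e assume "e \<in> {e\<in>corona. x\<in>e \<and> y\<in>e}"
  then have e: "e \<in> corona" "x \<in> e" "y \<in> e" by auto
  from e(1) show "e \<in> ?R"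
  proof (cases rule: corona_edgeE)
    case 1
    then have "x < p*t" using e(2) base_edge_subset by blast
    then show ?thesis using copy_vtx_ge[of p t m i j v] by (simp add: x_def)
  next
    case (2 i'' j'' g)
    note img = copy_vtx_in_image_iff[OF _ 2(2) _ copy_edge_subset[OF 2(1,3)]]
    have "i = i'' \<and> j = j'' \<and> v \<in> g" "i' = i'' \<and> j' = j'' \<and> w \<in> g"
      using e(2,3) img[OF ij(2) v] img[OF ij'(2) w] 2(4) unfolding x_def y_def by auto
    then show ?thesis using 2 by auto
  next
    case (3 i'' j'')
    then have sub: "e \<subseteq> part p i'' \<union> copy_set p t m i'' j''" "card e = k" "e \<inter> part p i'' \<noteq> {}"
      by (auto simp: mixed_edges_def)
    have "x \<notin> part p i''" "y \<notin> part p i''"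
      using part_less[OF 3(1)] copy_vtx_ge leD unfolding x_def y_def by blast+
    then have "x \<in> copy_set p t m i'' j''" "y \<in> copy_set p t m i'' j''" using sub e by blast+
    then have "i = i'' \<and> j = j''" "i' = i'' \<and> j' = j''"
      using copy_vtx_in_copy_set_iff[OF ij(2) 3(2) v] copy_vtx_in_copy_set_iff[OF ij'(2) 3(2) w]
      unfolding x_def y_def by simp_all
    moreover have "\<not> e \<subseteq> copy_set p t m i'' j''" using sub(3) part_copy_set_disjoint[OF 3(1)] by blast
    ultimately show ?thesis using sub e by auto
  qed
next
  fix e assume R: "e \<in> ?R"
  then have same: "i' = i" "j' = j" by (auto split: if_splits)
  have "x \<in> copy_set p t m i j" using v by (simp add: x_def copy_set_def)
  from R consider g where "g \<in> Gs i" "v \<in> g" "w \<in> g" "e = copy_vtx p t m i j ` g"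
    | "e \<subseteq> part p i \<union> copy_set p t m i j" "card e = k" "x \<in> e" "y \<in> e" "\<not> e \<subseteq> copy_set p t m i j"
    using same by (auto split: if_splits)
  then show "e \<in> {e\<in>corona. x\<in>e \<and> y\<in>e}"
  proof cases
    case 1 then show ?thesis using ij same unfolding x_def y_def by (auto simp: mem_corona_edges_iff)
  next
    case 2
    then have "e \<in> mixed_edges k p t m i j" using \<open>x \<in> copy_set p t m i j\<close>
      by (auto simp: mixed_edges_def)
    then show ?thesis using 2 ij by (auto simp: mem_corona_edges_iff)
  qed
qed

lemma codegree_corona_copies:
  assumes ij: "i < t" "j < p" and v: "v < m" and ij': "i' < t" "j' < p" and w: "w < m"
    and xy: "copy_vtx p t m i j v \<noteq> copy_vtx p t m i' j' w"
  shows "real (codegree corona (copy_vtx p t m i j v) (copy_vtx p t m i' j' w))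
    = (if i = i' \<and> j = j' then real (codegree (Gs i) v w) + copy_codeg else 0)"
proof (cases "i = i' \<and> j = j'")
  case False
  then have "{e\<in>corona. copy_vtx p t m i j v \<in> e \<and> copy_vtx p t m i' j' w \<in> e} = {}"
    using corona_edges_through_copy_pair[OF assms(1-6)] by auto
  then have "codegree corona (copy_vtx p t m i j v) (copy_vtx p t m i' j' w) = 0"
    unfolding codegree_def by (simp only: card.empty)
  then show ?thesis using False by auto
next
  case True
  let ?x = "copy_vtx p t m i j v" and ?y = "copy_vtx p t m i' j' w"
  define Lifted where "Lifted = (\<lambda>g. copy_vtx p t m i j ` g) ` {g\<in>Gs i. v \<in> g \<and> w \<in> g}"
  define Mixed where "Mixed = {e. e \<subseteq> part p i \<union> copy_set p t m i j \<and> card e = k \<and> ?x \<in> e \<and> ?y \<in> e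
      \<and> \<not> e \<subseteq> copy_set p t m i j}"
  have finL: "finite Lifted" using finite_copy_edges[OF ij(1)] by (simp add: Lifted_def)
  have finM: "finite Mixed"
    by (rule finite_subset[of _ "Pow (part p i \<union> copy_set p t m i j)"]) (auto simp: Mixed_def)
  have "e \<subseteq> copy_set p t m i j" if "e \<in> Lifted" for e
    using that copy_edge_subset[OF ij(1)] by (auto simp: Lifted_def copy_set_def)
  then have disj: "Lifted \<inter> Mixed = {}" by (auto simp: Mixed_def)
  have "inj (copy_vtx p t m i j)" by (auto simp: inj_def copy_vtx_def)
  then have "inj_on (\<lambda>g. copy_vtx p t m i j ` g) {g\<in>Gs i. v \<in> g \<and> w \<in> g}"
    by (auto simp: inj_on_def inj_image_eq_iff)
  then have cardL: "card Lifted = codegree (Gs i) v w"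
    by (simp add: Lifted_def codegree_def card_image)
  have "?x \<in> copy_set p t m i j" "?y \<in> copy_set p t m i j" using True v w by (simp_all add: copy_set_def)
  then have cardM: "real (card Mixed) = copy_codeg"
    using card_pair_subsets_not_within[of "part p i \<union> copy_set p t m i j" "copy_set p t m i j" ?x ?y k]
      xy card_part_Un_copy_set[OF ij(1)] card_copy_set
    by (simp add: Mixed_def copy_codeg_def)
  have "codegree corona ?x ?y = card (Lifted \<union> Mixed)"
    using corona_edges_through_copy_pair[OF assms(1-6)] True
    by (simp add: codegree_def Lifted_def Mixed_def)
  also have "\<dots> = card Lifted + card Mixed" by (rule card_Un_disjoint[OF finL finM disj])
  finally show ?thesis using True cardL cardM by simp
qed

section \<open>Block decomposition of the shifted Seidel matrix\<close>

text \<open>The paper's \<open>Y\<^sub>S\<^sub>i\<close>: the principal submatrix of \<open>S(G\<^sup>*)\<close> on each copy of \<open>G\<^sub>i\<^sup>*\<close>.\<close>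

definition copy_seidel :: "nat \<Rightarrow> real mat" where
  "copy_seidel i = seidel_mat m (Gs i) - (2 * copy_codeg) \<cdot>\<^sub>m (ones_mat m m - 1\<^sub>m m)"

definition diag_block :: "real \<Rightarrow> nat \<Rightarrow> real mat" where
  "diag_block \<mu> b = copy_seidel (b div p) - ones_mat m m - \<mu> \<cdot>\<^sub>m 1\<^sub>m m"

definition block_row_sum :: "real \<Rightarrow> real" where
  "block_row_sum \<mu> = - (1 + 2 * real r * (real k - 1) + 2 * copy_codeg * (real m - 1) + \<mu>)"

lemma diag_block_carrier[simp]: "diag_block \<mu> b \<in> carrier_mat m m"
  unfolding carrier_mat_def diag_block_def copy_seidel_def by simp

lemma diag_block_index:
  "v < m \<Longrightarrow> w < m \<Longrightarrow> diag_block \<mu> b $$ (v,w) =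
    (if v = w then - 1 - \<mu> else - 2 * real (codegree (Gs (b div p)) v w) - 2 * copy_codeg)"
  by (simp add: diag_block_def copy_seidel_def seidel_mat_index)

lemma diag_block_row_sum:
  assumes b: "b < p*t" and v: "v < m"
  shows "(\<Sum>w<m. diag_block \<mu> b $$ (v,w)) = block_row_sum \<mu>"
proof -
  have reg: "regular_hg k r m (Gs (b div p))"
    using copies_regular div_less_of_less_mult[OF b] by simp
  have "(\<Sum>w<m. diag_block \<mu> b $$ (v,w))
      = diag_block \<mu> b $$ (v,v) + (\<Sum>w\<in>{..<m}-{v}. diag_block \<mu> b $$ (v,w))"
    using v by (subst sum.remove[of _ v]) auto
  also have "(\<Sum>w\<in>{..<m}-{v}. diag_block \<mu> b $$ (v,w))
      = (\<Sum>w\<in>{..<m}-{v}. - 2 * copy_codeg - 2 * real (codegree (Gs (b div p)) v w))"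
    using v by (intro sum.cong refl) (auto simp: diag_block_index)
  also have "\<dots> = - 2 * copy_codeg * (real m - 1) - 2 * (real r * (real k - 1))"
    using v m_ge_2 regular_hg_codegree_sum[OF reg v]
    by (simp add: sum_subtractf sum_distrib_left[symmetric] card_Diff_singleton of_nat_diff)
  finally show ?thesis using v by (simp add: diag_block_index block_row_sum_def)
qed

lemma prod_det_diag_block:
  "(\<Prod>b<p*t. det (diag_block \<mu> b)) = (\<Prod>i<t. det (copy_seidel i - ones_mat m m - \<mu> \<cdot>\<^sub>m 1\<^sub>m m)) ^ p"
proof -
  have "(\<Prod>b<t*p. det (diag_block \<mu> b)) = (\<Prod>i<t. \<Prod>v<p. det (diag_block \<mu> (i*p + v)))"
    by (rule prod_blocks)
  also have "\<dots> = (\<Prod>i<t. det (copy_seidel i - ones_mat m m - \<mu> \<cdot>\<^sub>m 1\<^sub>m m) ^ p)"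
    by (intro prod.cong refl) (simp add: diag_block_def)
  finally show ?thesis by (simp add: mult.commute prod_power_distrib)
qed

definition base_block :: "real \<Rightarrow> real mat" where
  "base_block \<mu> = mat (p*t) (p*t) (\<lambda>(x,y). seidel_mat (p*t) E0 $$ (x,y)
      - (if x div p = y div p \<and> x \<noteq> y then 2 * part_codeg else 0) - (if x = y then \<mu> else 0))"

definition cross_block :: "real mat" where
  "cross_block = mat (p*t) (p*t*m) (\<lambda>(x,z). 1 - (if x div p = z div m div p then 2 * cross_codeg else 0))"

definition copies_block :: "real \<Rightarrow> real mat" where
  "copies_block \<mu> = block_diag_mat m (p*t) (diag_block \<mu>) + ones_mat (p*t*m) (p*t*m)"

lemma block_carriers[simp]:
  "base_block \<mu> \<in> carrier_mat (p*t) (p*t)"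
  "cross_block \<in> carrier_mat (p*t) (p*t*m)"
  "copies_block \<mu> \<in> carrier_mat (p*t*m) (p*t*m)"
  by (auto simp: base_block_def cross_block_def copies_block_def)

lemma block_dims[simp]:
  "dim_row (base_block \<mu>) = p*t" "dim_col (base_block \<mu>) = p*t"
  "dim_row cross_block = p*t" "dim_col cross_block = p*t*m"
  "dim_row (copies_block \<mu>) = p*t*m" "dim_col (copies_block \<mu>) = p*t*m"
  by (auto simp: base_block_def cross_block_def copies_block_def)

lemma base_block_index:
  assumes x: "x < p*t" and y: "y < p*t"
  shows "base_block \<mu> $$ (x,y) = (if x = y then - \<mu> else 1 - 2 * real (codegree corona x y))"
proof (cases "x = y")
  case False
  then show ?thesis using codegree_corona_base[OF x y False] x y
    by (simp add: base_block_def seidel_mat_index algebra_simps)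
qed (use x y in \<open>simp add: base_block_def seidel_mat_index\<close>)

lemma cross_block_index:
  assumes x: "x < p*t" and z: "z < p*t*m"
  shows "cross_block $$ (x,z) = 1 - 2 * real (codegree corona x (p*t + z))"
  using codegree_corona_cross[OF x copy_index_bounds[OF z]] x z
  by (simp add: cross_block_def copy_vtx_div_mod)

lemma copies_block_index:
  assumes z: "z < p*t*m" and z': "z' < p*t*m"
  shows "copies_block \<mu> $$ (z,z') = (if z = z' then - \<mu> else 1 - 2 * real (codegree corona (p*t + z) (p*t + z')))"
proof (cases "z = z'")
  case True
  then show ?thesis using z copy_index_bounds[OF z]
    by (simp add: copies_block_def block_diag_mat_def diag_block_index)
next
  case False
  have same_copy: "z div m div p = z' div m div p \<and> z div m mod p = z' div m mod p \<longleftrightarrow> z div m = z' div m"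
    by (metis div_mult_mod_eq)
  have "z div m = z' div m \<Longrightarrow> z mod m \<noteq> z' mod m" using False by (metis div_mult_mod_eq)
  then show ?thesis
    using codegree_corona_copies[OF copy_index_bounds[OF z] copy_index_bounds[OF z']] z z' False same_copy
      copy_index_bounds[OF z] copy_index_bounds[OF z']
    by (auto simp: copies_block_def block_diag_mat_def diag_block_index copy_vtx_div_mod algebra_simps)
qed

lemma seidel_corona_four_block:
  "seidel_mat (corona_size p t m) corona - \<mu> \<cdot>\<^sub>m 1\<^sub>m (corona_size p t m)
    = four_block_mat (base_block \<mu>) cross_block (transpose_mat cross_block) (copies_block \<mu>)"
    (is "?S = ?B")
proof (rule eq_matI)
  fix x y assume "x < dim_row ?B" "y < dim_col ?B"
  then have x: "x < p*t + p*t*m" and y: "y < p*t + p*t*m" by auto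
  have "?S $$ (x,y) = (if x = y then - \<mu> else 1 - 2 * real (codegree corona x y))"
    using x y by (simp add: corona_size_def seidel_mat_index)
  also have "\<dots> = ?B $$ (x,y)"
    using x y base_block_index[of x y] cross_block_index[of x "y - p*t"]
      cross_block_index[of y "x - p*t"] copies_block_index[of "x - p*t" "y - p*t"]
    by (auto simp: codegree_commute)
  finally show "?S $$ (x,y) = ?B $$ (x,y)" .
qed (auto simp: corona_size_def)

lemma block_diag_mult_ones_mat:
  "block_diag_mat m (p*t) (diag_block \<mu>) * ones_mat (p*t*m) (p*t*m)
    = block_row_sum \<mu> \<cdot>\<^sub>m ones_mat (p*t*m) (p*t*m)"
proof -
  have "ones_mat (p*t*m) (p*t*m) = mat (p*t*m) (p*t*m) (\<lambda>(z,w). (\<lambda>_ _. 1) (z div m) w)"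
    by (auto simp: ones_mat_def)
  then show ?thesis using diag_block_row_sum
    by (simp only:) (rule block_diag_mat_mult_block_constant)
qed

lemma det_copies_block:
  assumes h: "block_row_sum \<mu> \<noteq> 0"
  shows "det (copies_block \<mu>) = (1 + real (p*t*m) / block_row_sum \<mu>) * (\<Prod>b<p*t. det (diag_block \<mu> b))"
proof -
  let ?h = "block_row_sum \<mu>" and ?N = "p*t*m"
  let ?D = "block_diag_mat m (p*t) (diag_block \<mu>)" and ?J = "ones_mat ?N ?N"
  have D: "?D \<in> carrier_mat ?N ?N" by simp
  have "?D * (1\<^sub>m ?N + (1 / ?h) \<cdot>\<^sub>m ?J) = ?D * 1\<^sub>m ?N + ?D * ((1 / ?h) \<cdot>\<^sub>m ?J)"
    by (rule mult_add_distrib_mat[OF D]) auto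
  also have "?D * ((1 / ?h) \<cdot>\<^sub>m ?J) = (1 / ?h) \<cdot>\<^sub>m (?D * ?J)"
    by (rule mult_smult_distrib[OF D]) auto
  also have "(1 / ?h) \<cdot>\<^sub>m (?D * ?J) = ?J"
    using h by (intro eq_matI) (auto simp: block_diag_mult_ones_mat)
  finally have factor: "copies_block \<mu> = ?D * (1\<^sub>m ?N + (1 / ?h) \<cdot>\<^sub>m ?J)"
    using D by (simp add: copies_block_def)
  have "det (copies_block \<mu>) = det ?D * det (1\<^sub>m ?N + (1 / ?h) \<cdot>\<^sub>m ?J)"
    unfolding factor by (rule det_mult[OF D]) auto
  then show ?thesis
    using det_block_diag_mat[of "p*t" "diag_block \<mu>" m] det_one_plus_smult_ones_mat[of ?N "1 / ?h"]
    by simp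
qed

section \<open>The Schur complement\<close>

text \<open>The Schur complement is formed with an explicit solution \<open>W\<close> of \<open>D W = B\<^sup>T\<close>, so \<open>D\<close>
  is never inverted.\<close>

definition schur_factor :: "real \<Rightarrow> real \<Rightarrow> real mat" where
  "schur_factor \<alpha> \<beta> = mat (p*t*m) (p*t) (\<lambda>(z,w). \<alpha> + (if z div m div p = w div p then \<beta> else 0))"

lemma schur_factor_carrier[simp]: "schur_factor \<alpha> \<beta> \<in> carrier_mat (p*t*m) (p*t)"
  and schur_factor_dim[simp]: "dim_row (schur_factor \<alpha> \<beta>) = p*t*m" "dim_col (schur_factor \<alpha> \<beta>) = p*t"
  by (simp_all add: schur_factor_def)

lemma copies_block_mult_schur_factor:
  assumes \<alpha>: "\<alpha> * (block_row_sum \<mu> + real (p*t*m)) + real (p*m) * \<beta> = 1"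
    and \<beta>: "block_row_sum \<mu> * \<beta> = - 2 * cross_codeg"
  shows "copies_block \<mu> * schur_factor \<alpha> \<beta> = transpose_mat cross_block"
proof (rule eq_matI)
  let ?h = "block_row_sum \<mu>" and ?W = "schur_factor \<alpha> \<beta>"
  have W: "?W = mat (p*t*m) (p*t) (\<lambda>(z,w). (\<lambda>b w. \<alpha> + (if b div p = w div p then \<beta> else 0)) (z div m) w)"
    by (simp add: schur_factor_def)
  have DW: "block_diag_mat m (p*t) (diag_block \<mu>) * ?W = ?h \<cdot>\<^sub>m ?W"
    using diag_block_row_sum by (subst (1 2) W) (rule block_diag_mat_mult_block_constant)
  fix x w assume "x < dim_row (transpose_mat cross_block)" "w < dim_col (transpose_mat cross_block)"
  then have x: "x < p*t*m" and w: "w < p*t" by auto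
  have "(ones_mat (p*t*m) (p*t*m) * ?W) $$ (x,w) = (\<Sum>z<p*t*m. \<alpha> + (if z div m div p = w div p then \<beta> else 0))"
    using x w by (subst index_mult_mat_sum[of _ _ "p*t*m"]) (auto simp: schur_factor_def intro!: sum.cong)
  also have "\<dots> = real (p*m) * (real t * \<alpha> + \<beta>)"
    using sum_copy_blocks[where f = "\<lambda>i. \<alpha> + (if i = w div p then \<beta> else 0)"] w div_less_of_less_mult[OF w]
    by (simp add: sum.distrib)
  finally have JW: "(ones_mat (p*t*m) (p*t*m) * ?W) $$ (x,w) = real (p*m) * (real t * \<alpha> + \<beta>)" .
  have "copies_block \<mu> * ?W = block_diag_mat m (p*t) (diag_block \<mu>) * ?W + ones_mat (p*t*m) (p*t*m) * ?W"
    unfolding copies_block_def by (rule add_mult_distrib_mat[of _ _ "p*t*m" _ _ "p*t"]) auto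
  then have "(copies_block \<mu> * ?W) $$ (x,w) = ?h * ?W $$ (x,w) + (ones_mat (p*t*m) (p*t*m) * ?W) $$ (x,w)"
    using x w DW by simp
  also have "\<dots> = transpose_mat cross_block $$ (x,w)"
    using x w \<alpha> \<beta> JW by (auto simp: schur_factor_def cross_block_def algebra_simps)
  finally show "(copies_block \<mu> * ?W) $$ (x,w) = transpose_mat cross_block $$ (x,w)" .
qed auto

lemma cross_block_mult_schur_factor_index:
  assumes u: "u < p*t" and w: "w < p*t"
  shows "(cross_block * schur_factor \<alpha> \<beta>) $$ (u,w) = real (p*m) *
    (real t * \<alpha> + \<beta> - 2 * cross_codeg * \<alpha> - (if u div p = w div p then 2 * cross_codeg * \<beta> else 0))"
proof -
  let ?f = "\<lambda>i. (1 - (if u div p = i then 2 * cross_codeg else 0)) * (\<alpha> + (if i = w div p then \<beta> else 0))"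
  have "(cross_block * schur_factor \<alpha> \<beta>) $$ (u,w) = (\<Sum>z<p*t*m. ?f (z div m div p))"
    using u w by (subst index_mult_mat_sum[of _ _ "p*t*m"])
      (auto simp: cross_block_def schur_factor_def intro!: sum.cong)
  also have "\<dots> = real (p*m) * (\<Sum>i<t. ?f i)" by (rule sum_copy_blocks)
  also have "(\<Sum>i<t. ?f i) = (\<Sum>i<t. \<alpha> + (if i = w div p then \<beta> else 0)
      - (if i = u div p then 2 * cross_codeg * \<alpha> else 0)
      - (if i = u div p then (if u div p = w div p then 2 * cross_codeg * \<beta> else 0) else 0))"
    by (intro sum.cong refl) (auto simp: algebra_simps)
  finally show ?thesis
    using div_less_of_less_mult[OF u] div_less_of_less_mult[OF w] by (simp add: sum.distrib sum_subtractf)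
qed

lemma base_block_minus_schur:
  fixes \<mu> :: real
  defines "h \<equiv> block_row_sum \<mu>"
  assumes h: "h \<noteq> 0" and hN: "h + real (p*m*t) \<noteq> 0"
  defines "\<alpha> \<equiv> (h + 2 * cross_codeg * real (p*m)) / (h * (h + real (p*m*t)))"
    and "\<beta> \<equiv> - 2 * cross_codeg / h"
  shows "base_block \<mu> - cross_block * schur_factor \<alpha> \<beta> = seidel_mat (p*t) E0
    + kron (1\<^sub>m t) ((- (2 * part_codeg + 4 * real (p*m) * cross_codeg^2 / h)) \<cdot>\<^sub>m ones_mat p p
                    + (2 * part_codeg - \<mu>) \<cdot>\<^sub>m 1\<^sub>m p)
    - (real (p*m) / h * ((real t - 4 * cross_codeg)
        - real (p*m) * (real t - 2 * cross_codeg)^2 / (h + real (p*m*t)))) \<cdot>\<^sub>m ones_mat (p*t) (p*t)"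
    (is "_ = ?T")
proof (rule eq_matI)
  fix u w assume "u < dim_row ?T" "w < dim_col ?T"
  then have u: "u < p*t" and w: "w < p*t" by (auto simp: kron_def)
  have "u div p < t" "w div p < t" using u w div_less_of_less_mult by blast+
  have uw: "u = w \<longleftrightarrow> u div p = w div p \<and> u mod p = w mod p" by (metis div_mult_mod_eq)
  have const: "real (p*m) * (real t * \<alpha> + \<beta> - 2 * cross_codeg * \<alpha>) = real (p*m) / h * ((real t - 4 * cross_codeg)
        - real (p*m) * (real t - 2 * cross_codeg)^2 / (h + real (p*m*t)))"
  proof -
    have "h * (h + real (p*m*t)) \<noteq> 0" using h hN by simp
    then show ?thesis using h hN unfolding \<alpha>_def \<beta>_def
      by (simp add: divide_simps) (simp add: algebra_simps power2_eq_square)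
  qed
  have quad: "real (p*m) * (2 * cross_codeg * \<beta>) = - (4 * real (p*m) * cross_codeg^2 / h)"
    unfolding \<beta>_def using h by (simp add: field_simps power2_eq_square)
  have "(base_block \<mu> - cross_block * schur_factor \<alpha> \<beta>) $$ (u,w) = seidel_mat (p*t) E0 $$ (u,w)
      - (if u div p = w div p \<and> u \<noteq> w then 2 * part_codeg else 0) - (if u = w then \<mu> else 0)
      - real (p*m) * (real t * \<alpha> + \<beta> - 2 * cross_codeg * \<alpha>
          - (if u div p = w div p then 2 * cross_codeg * \<beta> else 0))"
    using u w cross_block_mult_schur_factor_index[OF u w] by (simp add: base_block_def)
  also have "\<dots> = ?T $$ (u,w)"
    using u w p_gt_0 \<open>u div p < t\<close> \<open>w div p < t\<close> const quad uw
    by (auto simp: kron_def mult.commute algebra_simps)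
  finally show "(base_block \<mu> - cross_block * schur_factor \<alpha> \<beta>) $$ (u,w) = ?T $$ (u,w)" .
qed (auto simp: kron_def)

end

theorem theorem3p3:
  fixes k r p t m :: nat and E0 :: "nat set set" and Gs :: "nat \<Rightarrow> nat set set"
    and \<mu> :: real
  assumes "1 \<le> p" and "2 \<le> m"
    and "uniform_hg k (p*t) E0"
    and "\<forall>i<t. regular_hg k r m (Gs i)"
  defines "a \<equiv> (if 2 \<le> p then real p * (real (binom (p+m-2) (int k - 2)) - real (binom (p-2) (int k - 2))) else 0)"
    and "b \<equiv> real (binom (p+m-2) (int k - 2))"
    and "c \<equiv> real (binom (p+m-2) (int k - 2)) - real (binom (m-2) (int k - 2))"
    and "Y \<equiv> (\<lambda>i. seidel_mat m (Gs i) - (2*(real (binom (p+m-2) (int k - 2)) - real (binom (m-2) (int k - 2)))) \<cdot>\<^sub>m (ones_mat m m - 1\<^sub>m m))"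
    and "h \<equiv> - (1 + 2 * real r * (real k - 1) + 2 * (real (binom (p+m-2) (int k - 2)) - real (binom (m-2) (int k - 2))) * (real m - 1) + \<mu>)"
  assumes "\<forall>i<t. invertible_mat (Y i - ones_mat m m - \<mu> \<cdot>\<^sub>m 1\<^sub>m m)"
    and "h \<noteq> 0" and "h + real (p*m*t) \<noteq> 0"
  shows "charP (seidel_mat (corona_size p t m) (corona_edges k p t m E0 Gs)) \<mu> =
    (1 + real (p*m*t) / h)
    * (\<Prod>i<t. det (Y i - ones_mat m m - \<mu> \<cdot>\<^sub>m 1\<^sub>m m)) ^ p
    * det (seidel_mat (p*t) E0
           + kron (1\<^sub>m t) ((- (2*a + 4 * real (p*m) * b^2 / h)) \<cdot>\<^sub>m ones_mat p p + (2*a - \<mu>) \<cdot>\<^sub>m 1\<^sub>m p)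
           - (real (p*m) / h * ((real t - 4*b) - real (p*m) * (real t - 2*b)^2 / (h + real (p*m*t)))) \<cdot>\<^sub>m ones_mat (p*t) (p*t))"
proof -
  interpret corona_hypergraph k r p t m E0 Gs
    using assms(1-4) by unfold_locales
  have params: "a = part_codeg" "b = cross_codeg" "Y = copy_seidel" "h = block_row_sum \<mu>"
    by (simp_all add: a_def b_def h_def part_codeg_def cross_codeg_def copy_codeg_def block_row_sum_def)
      (simp add: Y_def copy_seidel_def copy_codeg_def fun_eq_iff)
  define \<alpha> where "\<alpha> = (h + 2 * b * real (p*m)) / (h * (h + real (p*m*t)))"
  define \<beta> where "\<beta> = - 2 * b / h"
  have "h * (h + real (p*m*t)) \<noteq> 0" using assms(11,12) by simp
  then have "copies_block \<mu> * schur_factor \<alpha> \<beta> = transpose_mat cross_block"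
    using assms(11,12) params
    by (intro copies_block_mult_schur_factor) (auto simp: \<alpha>_def \<beta>_def divide_simps algebra_simps)
  then have "charP (seidel_mat (corona_size p t m) corona) \<mu>
      = det (four_block_mat (base_block \<mu>) cross_block (copies_block \<mu> * schur_factor \<alpha> \<beta>) (copies_block \<mu>))"
    by (simp add: charP_def seidel_corona_four_block)
  also have "\<dots> = det (copies_block \<mu>) * det (base_block \<mu> - cross_block * schur_factor \<alpha> \<beta>)"
    by (rule det_four_block_mat_factor) auto
  finally show ?thesis
    using det_copies_block prod_det_diag_block base_block_minus_schur assms(11,12) params
    by (simp add: \<alpha>_def \<beta>_def mult_ac)
qed

end
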